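(* For every integer $k\ge1$, the vector $(1,3,k,1)$ is not realizable.
   Context: All graphs are finite, nonempty, and reflexive (every vertex has a loop). $N[v]$ is the closed neighborhood of $v$ (including $v$). For distinct $v,w$, $w$ strictly corners $v$ if $N[v]\subsetneq N[w]$; $v$ is then a strict corner. Corner ranking: set $G^{(1)}=G$, $k=1$. If $G^{(k)}$ is a clique, give all its vertices rank $k$ and stop. Else if $G^{(k)}$ has no strict corners, give all its vertices rank $\infty$ and stop. Else give every strict corner of $G^{(k)}$ rank $k$, delete them to get $G^{(k+1)}$ (induced subgraph), increase $k$ and repeat. The corner rank is the largest rank of a vertex; $X_k$ is the set of rank-$k$ vertices; cop-win graphs are exactly those of finite corner rank. The rank cardinality vector of a graph of corner rank $\alpha$ is $(x_\alpha,\dots,x_1)$ with $x_k=|X_k|$; a vector (finite list of positive integers) is realizable if it is the rank cardinality vector of some cop-win graph. *)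

theory Defs
  imports Main
begin

text \<open>A finite, nonempty, reflexive (undirected) graph on vertex set V with
  adjacency relation E (only its restriction to V matters).\<close>
definition reflexive_graph :: "('a \<Rightarrow> 'a \<Rightarrow> bool) \<Rightarrow> 'a set \<Rightarrow> bool" where
  "reflexive_graph E V \<longleftrightarrow> finite V \<and> V \<noteq> {} \<and> (\<forall>v\<in>V. E v v)
     \<and> (\<forall>u\<in>V. \<forall>v\<in>V. E u v \<longrightarrow> E v u)"

definition cnbhd :: "('a \<Rightarrow> 'a \<Rightarrow> bool) \<Rightarrow> 'a set \<Rightarrow> 'a \<Rightarrow> 'a set" where
  "cnbhd E S v = {u \<in> S. E v u}"

definition is_clique :: "('a \<Rightarrow> 'a \<Rightarrow> bool) \<Rightarrow> 'a set \<Rightarrow> bool" where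
  "is_clique E S \<longleftrightarrow> (\<forall>u\<in>S. \<forall>v\<in>S. E u v)"

definition strict_corners :: "('a \<Rightarrow> 'a \<Rightarrow> bool) \<Rightarrow> 'a set \<Rightarrow> 'a set" where
  "strict_corners E S = {v \<in> S. \<exists>w\<in>S. w \<noteq> v \<and> cnbhd E S v \<subset> cnbhd E S w}"

text \<open>Vertex set of G^(k+1): remaining vertices after k rounds of corner deletion.\<close>
fun remaining :: "('a \<Rightarrow> 'a \<Rightarrow> bool) \<Rightarrow> 'a set \<Rightarrow> nat \<Rightarrow> 'a set" where
  "remaining E V 0 = V"
| "remaining E V (Suc n) = remaining E V n - strict_corners E (remaining E V n)"

text \<open>Finite corner rank: some G^(k) is a clique (before any stage without strict
  corners, since then the process would stay stuck on a non-clique forever).\<close>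
definition cop_win :: "('a \<Rightarrow> 'a \<Rightarrow> bool) \<Rightarrow> 'a set \<Rightarrow> bool" where
  "cop_win E V \<longleftrightarrow> (\<exists>n. is_clique E (remaining E V n))"

text \<open>Corner rank alpha: G^(alpha) is the first clique, i.e. alpha - 1 = least n.\<close>
definition corner_rank :: "('a \<Rightarrow> 'a \<Rightarrow> bool) \<Rightarrow> 'a set \<Rightarrow> nat" where
  "corner_rank E V = Suc (LEAST n. is_clique E (remaining E V n))"

definition rank_set :: "('a \<Rightarrow> 'a \<Rightarrow> bool) \<Rightarrow> 'a set \<Rightarrow> nat \<Rightarrow> 'a set" where
  "rank_set E V k =
     (if k = corner_rank E V then remaining E V (k - 1)
      else strict_corners E (remaining E V (k - 1)))"

text \<open>Rank cardinality vector (x_alpha, ..., x_1) as a list.\<close>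
definition rank_card_vector :: "('a \<Rightarrow> 'a \<Rightarrow> bool) \<Rightarrow> 'a set \<Rightarrow> nat list" where
  "rank_card_vector E V = map (\<lambda>k. card (rank_set E V k)) (rev [1..<Suc (corner_rank E V)])"

text \<open>Realizable: rank cardinality vector of some cop-win graph. Vertices are taken
  from nat, which is no restriction since every finite graph has an isomorphic copy
  on natural numbers.\<close>
definition realizable :: "nat list \<Rightarrow> bool" where
  "realizable xs \<longleftrightarrow> (\<exists>(V::nat set) E. reflexive_graph E V \<and> cop_win E V
                        \<and> rank_card_vector E V = xs)"

end

theory Submission
  imports Defs
begin

text \<open>If G realizes (1,3,k,1), then G has a unique strict corner u, and G^(3) is a
  four-vertex graph with three strict corners, hence has a dominating vertex z and a vertex c
  adjacent to z only. Every strict corner x of G^(2) = G - u is adjacent to u and is dominated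
  in G^(2) by a vertex of G^(3) not adjacent to u, for otherwise x would already be a strict
  corner of G. Chasing these dominators leads to a contradiction; the value of k plays no role.\<close>

lemma reflexive_graph_subset:
  assumes "reflexive_graph E V" "S \<subseteq> V" "S \<noteq> {}"
  shows "reflexive_graph E S"
  using assms finite_subset unfolding reflexive_graph_def by blast

lemma strict_corners_iff:
  "v \<in> strict_corners E S \<longleftrightarrow>
     v \<in> S \<and> (\<exists>w\<in>S. w \<noteq> v \<and> (\<forall>t\<in>S. E v t \<longrightarrow> E w t) \<and> (\<exists>t\<in>S. E w t \<and> \<not> E v t))"
  unfolding strict_corners_def cnbhd_def by blast

lemma strict_cornerI:
  assumes "v \<in> S" "w \<in> S" "w \<noteq> v" "\<forall>t\<in>S. E v t \<longrightarrow> E w t" "t \<in> S" "E w t" "\<not> E v t"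
  shows "v \<in> strict_corners E S"
  using assms unfolding strict_corners_def cnbhd_def by blast

lemma strict_cornerE:
  assumes "v \<in> strict_corners E S"
  obtains w where "v \<in> S" "w \<in> S" "w \<noteq> v" "\<forall>t\<in>S. E v t \<longrightarrow> E w t"
    "\<exists>t\<in>S. E w t \<and> \<not> E v t"
  using assms unfolding strict_corners_def cnbhd_def by blast

lemma strict_corners_subset: "strict_corners E S \<subseteq> S"
  unfolding strict_corners_def by blast

lemma remaining_subset: "remaining E V n \<subseteq> V"
  by (induction n) auto

lemma strict_corner_after_deletion:
  assumes "v \<in> strict_corners E (S - {u})" "v \<notin> strict_corners E S"
  obtains w where "w \<in> S - {u}" "\<forall>t\<in>S - {u}. E v t \<longrightarrow> E w t" "E v u" "\<not> E w u"
proof -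
  obtain w where w: "v \<in> S - {u}" "w \<in> S - {u}" "w \<noteq> v" "\<forall>t\<in>S - {u}. E v t \<longrightarrow> E w t"
    "\<exists>t\<in>S - {u}. E w t \<and> \<not> E v t"
    using assms(1) by (rule strict_cornerE)
  have "E v u \<and> \<not> E w u"
  proof (rule ccontr)
    assume "\<not> (E v u \<and> \<not> E w u)"
    then have "\<forall>t\<in>S. E v t \<longrightarrow> E w t" using w(4) by blast
    then have "v \<in> strict_corners E S" using w by (auto intro: strict_cornerI)
    with assms(2) show False ..
  qed
  with w that show thesis by blast
qed

lemma four_vertex_three_strict_corners:
  assumes graph: "reflexive_graph E {a, b, c, z}"
    and distinct: "distinct [a, b, c, z]"
    and corners: "strict_corners E {a, b, c, z} = {a, b, c}"
  shows "(\<forall>t\<in>{a, b, c, z}. E z t) \<and> (\<exists>p\<in>{a, b, c}. cnbhd E {a, b, c, z} p = {p, z})"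
proof -
  have refl: "E a a" "E b b" "E c c" "E z z"
    and sym: "E b a = E a b" "E c a = E a c" "E z a = E a z" "E c b = E b c"
      "E z b = E b z" "E z c = E c z"
    using graph unfolding reflexive_graph_def by blast+
  have "a \<in> strict_corners E {a, b, c, z}" "b \<in> strict_corners E {a, b, c, z}"
    "c \<in> strict_corners E {a, b, c, z}" "z \<notin> strict_corners E {a, b, c, z}"
    using corners distinct by auto
  then have "E z a \<and> E z b \<and> E z c \<and>
    ((\<not> E a b \<and> \<not> E a c) \<or> (\<not> E b a \<and> \<not> E b c) \<or> (\<not> E c a \<and> \<not> E c b))"
    using distinct refl
    by (cases "E a b"; cases "E a c"; cases "E a z"; cases "E b c"; cases "E b z"; cases "E c z")
      (simp_all add: strict_corners_iff sym)
  then show ?thesis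
    using distinct refl sym unfolding cnbhd_def by auto
qed

lemma non_strict_corner_escapes:
  assumes "p \<in> S - strict_corners E S" "z \<in> S" "q \<in> S" "E z q" "\<not> E p q"
  obtains t where "t \<in> S" "E p t" "\<not> E z t"
proof -
  have "z \<noteq> p" using assms(4,5) by blast
  then have "\<not> (\<forall>t\<in>S. E p t \<longrightarrow> E z t)"
    using assms strict_cornerI[of p S z E q] by blast
  with that show thesis by blast
qed

locale unique_strict_corner =
  fixes E :: "'a \<Rightarrow> 'a \<Rightarrow> bool" and V :: "'a set" and u :: 'a
  assumes graph: "reflexive_graph E V"
    and unique: "strict_corners E V = {u}"
begin

text \<open>G, X and T are the vertex sets of G^(2), of its strict corners X_2, and of G^(3).\<close>

abbreviation "G \<equiv> V - {u}"
abbreviation "X \<equiv> strict_corners E G"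
abbreviation "T \<equiv> remaining E V 2"

lemma refl: "v \<in> V \<Longrightarrow> E v v"
  using graph unfolding reflexive_graph_def by blast

lemma sym: "s \<in> V \<Longrightarrow> t \<in> V \<Longrightarrow> E s t \<Longrightarrow> E t s"
  using graph unfolding reflexive_graph_def by blast

lemma u_in_V: "u \<in> V"
  using unique strict_corners_subset[of E V] by blast

lemma third_stage_eq: "T = G - X"
  by (simp add: numeral_2_eq_2 unique)

lemma X_subset: "X \<subseteq> G"
  by (rule strict_corners_subset)

lemma T_subset: "T \<subseteq> G"
  using third_stage_eq by blast

lemma corner_adj_u: "x \<in> X \<Longrightarrow> E x u"
  using strict_corner_after_deletion[of x E V u] unique strict_corners_subset[of E G] by blast

lemma corner_dominator:
  assumes x: "x \<in> X"
  obtains w where "w \<in> T" "\<forall>t\<in>G. E x t \<longrightarrow> E w t" "\<not> E w u"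
proof -
  have "x \<notin> strict_corners E V" using x unique strict_corners_subset[of E G] by blast
  with x obtain w where w: "w \<in> G" "\<forall>t\<in>G. E x t \<longrightarrow> E w t" "\<not> E w u"
    by (rule strict_corner_after_deletion)
  then have "w \<in> T" using corner_adj_u third_stage_eq by blast
  with w that show thesis by blast
qed

lemma corner_escapes:
  assumes "p \<in> T" "z \<in> T" "\<forall>t\<in>T. E z t" "q \<in> T" "E z q" "\<not> E p q"
  obtains x where "x \<in> X" "E p x" "\<not> E z x"
proof -
  have "p \<in> G - X" using assms(1) third_stage_eq by blast
  moreover have "z \<in> G" "q \<in> G" using assms(2,4) T_subset by blast+
  ultimately obtain t where "t \<in> G" "E p t" "\<not> E z t"
    using assms(5,6) by (rule non_strict_corner_escapes)
  with assms(3) third_stage_eq that show thesis by blast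
qed

end

locale pendant_in_third_stage = unique_strict_corner +
  fixes z c :: 'a
  assumes z_in: "z \<in> T" and z_dominating: "\<forall>t\<in>T. E z t"
    and c_in: "c \<in> T" and c_nbhd: "cnbhd E T c = {c, z}"
begin

lemma c_nbrs: "t \<in> T \<Longrightarrow> E c t \<Longrightarrow> t = c \<or> t = z"
  using c_nbhd unfolding cnbhd_def by blast

lemma corner_dominated_by_c:
  assumes x: "x \<in> X" and "E c x" "\<not> E z x"
  shows "\<forall>t\<in>G. E x t \<longrightarrow> E c t" "\<not> E c u"
proof -
  obtain w where w: "w \<in> T" "\<forall>t\<in>G. E x t \<longrightarrow> E w t" "\<not> E w u"
    using x by (rule corner_dominator)
  have G: "x \<in> G" "w \<in> G" "c \<in> G" using x X_subset w(1) c_in T_subset by blast+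
  have "E w x" using w(2) refl G by blast
  moreover have "E c w" using w(2) sym assms(2) G by blast
  ultimately have "w = c" using c_nbrs w(1) assms(3) by blast
  with w show "\<forall>t\<in>G. E x t \<longrightarrow> E c t" "\<not> E c u" by blast+
qed

lemma neighbour_corner_dominated_by_c:
  assumes x': "x' \<in> X" "E c x'" "\<not> E z x'" and x: "x \<in> X" "E x x'"
  shows "\<forall>t\<in>G. E x t \<longrightarrow> E c t"
proof -
  obtain w where w: "w \<in> T" "\<forall>t\<in>G. E x t \<longrightarrow> E w t"
    using x(1) by (rule corner_dominator)
  have G: "x' \<in> G" "w \<in> G" using x'(1) X_subset w(1) T_subset by blast+
  have "E w x'" using w(2) x(2) G by blast
  moreover from this have "E c w" using corner_dominated_by_c[OF x'] sym G by blast
  ultimately have "w = c" using c_nbrs w(1) x'(3) by blast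
  with w show ?thesis by blast
qed

text \<open>The dominator y of u sees every corner of G^(2), so it lies outside G^(3) and is itself
  dominated by c; then c sees the escape vertex of a, which leaves a corner without dominator.\<close>
theorem no_third_vertex:
  assumes a: "a \<in> T" "a \<notin> {c, z}"
  shows False
proof -
  have not_ca: "\<not> E c a" using a c_nbhd unfolding cnbhd_def by blast
  then have not_ac: "\<not> E a c" using sym a(1) c_in T_subset by blast
  obtain xc where xc: "xc \<in> X" "E c xc" "\<not> E z xc"
    using z_dominating a(1) by (blast intro: corner_escapes[OF c_in z_in z_dominating a(1) _ not_ca])
  obtain xa where xa: "xa \<in> X" "E a xa" "\<not> E z xa"
    using z_dominating c_in by (blast intro: corner_escapes[OF a(1) z_in z_dominating c_in _ not_ac])
  obtain y where y: "y \<in> G" "\<forall>t\<in>V. E u t \<longrightarrow> E y t"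
    using unique strict_cornerE[of u E V] by blast
  have y_adj: "E y x" if "x \<in> X" for x
    using y(2) corner_adj_u[OF that] sym that X_subset u_in_V by blast
  have "y \<notin> T"
  proof
    assume "y \<in> T"
    moreover have "E c y"
      using corner_dominated_by_c(1)[OF xc] y_adj[OF xc(1)] sym y(1) xc(1) X_subset by blast
    ultimately have "y = c \<or> y = z" by (rule c_nbrs)
    moreover have "E y u" using y(2) refl u_in_V by blast
    ultimately show False using corner_dominated_by_c(2)[OF xc] y_adj[OF xc(1)] xc(3) by blast
  qed
  then have "y \<in> X" using y(1) third_stage_eq by blast
  then have "\<forall>t\<in>G. E y t \<longrightarrow> E c t"
    by (rule neighbour_corner_dominated_by_c[OF xc _ y_adj[OF xc(1)]])
  then have c_xa: "E c xa" using y_adj[OF xa(1)] xa(1) X_subset by blast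
  obtain w where w: "w \<in> T" "\<forall>t\<in>G. E xa t \<longrightarrow> E w t"
    using xa(1) by (rule corner_dominator)
  have xa_G: "xa \<in> G" using xa(1) X_subset by blast
  have "w \<in> G" "a \<in> G" "c \<in> G" using w(1) a(1) c_in T_subset by blast+
  then have "E w xa" "E c w" "E w a"
    using w(2) xa_G refl[of xa] sym[of c xa] sym[of w c] sym[of a xa] c_xa xa(2) by auto
  then show False using c_nbrs w(1) not_ca xa(3) by blast
qed

end

lemma length_rank_card_vector: "length (rank_card_vector E V) = corner_rank E V"
  unfolding rank_card_vector_def by simp

lemma nth_rank_card_vector:
  assumes "i < corner_rank E V"
  shows "rank_card_vector E V ! i = card (rank_set E V (corner_rank E V - i))"
  using assms unfolding rank_card_vector_def by (simp add: rev_nth Suc_diff_Suc del: upt_Suc)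

theorem corollary3p25:
  fixes k :: nat
  assumes "k \<ge> 1"
  shows "\<not> realizable [1, 3, k, 1]"
proof
  assume "realizable [1, 3, k, 1]"
  then obtain V :: "nat set" and E where graph: "reflexive_graph E V"
    and vec: "rank_card_vector E V = [1, 3, k, 1]"
    unfolding realizable_def by blast
  have rank: "corner_rank E V = 4" using length_rank_card_vector[of E V] vec by simp
  have "card (rank_set E V (4 - i)) = [1, 3, k, 1] ! i" if "i < 4" for i
    using nth_rank_card_vector[of i E V] that by (simp add: vec rank)
  from this[of 0] this[of 1] this[of 3]
  have "card (remaining E V 3) = 1" "card (strict_corners E (remaining E V 2)) = 3"
    "card (strict_corners E V) = 1"
    by (simp_all add: rank_set_def rank)
  then obtain z a b c u where z: "remaining E V 3 = {z}"
    and abc: "strict_corners E (remaining E V 2) = {a, b, c}" "distinct [a, b, c]"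
    and u: "strict_corners E V = {u}"
    by (auto simp: card_1_singleton_iff card_3_iff)
  have "remaining E V 3 = remaining E V 2 - strict_corners E (remaining E V 2)"
    by (simp add: numeral_3_eq_3 numeral_2_eq_2)
  then have stage3: "remaining E V 2 = {a, b, c, z}" "distinct [a, b, c, z]"
    using z abc strict_corners_subset[of E "remaining E V 2"] by auto
  moreover have "reflexive_graph E {a, b, c, z}"
    using reflexive_graph_subset[OF graph] remaining_subset[of E V 2] stage3 by auto
  ultimately obtain p where "\<forall>t\<in>{a, b, c, z}. E z t" "p \<in> {a, b, c}"
    "cnbhd E {a, b, c, z} p = {p, z}"
    using four_vertex_three_strict_corners abc(1) by metis
  then have "pendant_in_third_stage E V u z p"
    using graph u stage3(1)
    unfolding pendant_in_third_stage_def pendant_in_third_stage_axioms_def unique_strict_corner_def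
    by auto
  moreover obtain q where "q \<in> {a, b, c}" "q \<noteq> p" using abc(2) by auto
  ultimately show False
    using pendant_in_third_stage.no_third_vertex[of E V u z p q] stage3 by auto
qed

end
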